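(* Let $F:\mathcal{P}(V,A)\to S_2(A)$ be an irreducible, weakly viable consular election rule satisfying SPP and SPO. If $\{a,b\}$ is an edge of the range graph $\mathcal{G}(F)$, then there exists $c\in A$ such that $\{a,c\}$ and $\{b,c\}$ are also edges of $\mathcal{G}(F)$ (so $a,b,c$ form a $3$-cycle).
   Context: $V$ is a finite nonempty set of voters, $A$ a finite set of alternatives; a profile $P$ assigns to each voter $i$ a linear order $P_i$ on $A$; $P_i'P_{-i}$ replaces voter $i$'s order by $P_i'$; $P|_B$ is the profile of restrictions to $B\subseteq A$. $S_2(A)$ is the set of 2-element subsets of $A$; a consular election rule is a map $F:\mathcal{P}(V,A)\to S_2(A)$. SPO: for all $P$, $i$, $P_i'$, $\mathrm{best}(P_i,F(P))\succeq_i\mathrm{best}(P_i,F(P_i'P_{-i}))$; SPP: same with $\mathrm{worst}$, where $\mathrm{best}(P_i,W)$, $\mathrm{worst}(P_i,W)$ are the $P_i$-best and $P_i$-worst elements of $W$. Weakly viable: every $a\in A$ lies in $F(P)$ for some $P$. $F$ is reducible if there is a partition $A=B\uplus C$ and social choice functions $G:\mathcal{P}(V,B)\to B$, $H:\mathcal{P}(V,C)\to C$ with $F(P)=\{G(P|_B),H(P|_C)\}$ for all $P$; irreducible means not reducible. The range graph $\mathcal{G}(F)$ has vertex set $A$ and edge set equal to the range of $F$. *)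

theory Defs
  imports Main
begin

text \<open>Convention: a preference of a voter is a linear order R on A (reflexive,
  as in linear_order_on); (x, y) \<in> R means the voter weakly prefers x to y.
  A profile on voters V and alternatives A assigns a linear order on A to each
  voter in V and the empty relation to every non-voter (extensionality).\<close>

definition profiles :: "'v set \<Rightarrow> 'a set \<Rightarrow> ('v \<Rightarrow> ('a \<times> 'a) set) set" where
  "profiles V A = {P. (\<forall>i\<in>V. linear_order_on A (P i)) \<and> (\<forall>i. i \<notin> V \<longrightarrow> P i = {})}"

definition restrict_profile :: "('v \<Rightarrow> ('a \<times> 'a) set) \<Rightarrow> 'a set \<Rightarrow> ('v \<Rightarrow> ('a \<times> 'a) set)" where
  "restrict_profile P B = (\<lambda>i. P i \<inter> (B \<times> B))"

definition S2 :: "'a set \<Rightarrow> 'a set set" where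
  "S2 A = {W. W \<subseteq> A \<and> card W = 2}"

definition best :: "('a \<times> 'a) set \<Rightarrow> 'a set \<Rightarrow> 'a" where
  "best R W = (THE b. b \<in> W \<and> (\<forall>x\<in>W. (b, x) \<in> R))"

definition worst :: "('a \<times> 'a) set \<Rightarrow> 'a set \<Rightarrow> 'a" where
  "worst R W = (THE w. w \<in> W \<and> (\<forall>x\<in>W. (x, w) \<in> R))"

definition consular_rule :: "'v set \<Rightarrow> 'a set \<Rightarrow> (('v \<Rightarrow> ('a \<times> 'a) set) \<Rightarrow> 'a set) \<Rightarrow> bool" where
  "consular_rule V A F = (\<forall>P\<in>profiles V A. F P \<in> S2 A)"

definition SPO :: "'v set \<Rightarrow> 'a set \<Rightarrow> (('v \<Rightarrow> ('a \<times> 'a) set) \<Rightarrow> 'a set) \<Rightarrow> bool" where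
  "SPO V A F = (\<forall>P\<in>profiles V A. \<forall>i\<in>V. \<forall>Q. linear_order_on A Q \<longrightarrow>
      (best (P i) (F P), best (P i) (F (P(i := Q)))) \<in> P i)"

definition SPP :: "'v set \<Rightarrow> 'a set \<Rightarrow> (('v \<Rightarrow> ('a \<times> 'a) set) \<Rightarrow> 'a set) \<Rightarrow> bool" where
  "SPP V A F = (\<forall>P\<in>profiles V A. \<forall>i\<in>V. \<forall>Q. linear_order_on A Q \<longrightarrow>
      (worst (P i) (F P), worst (P i) (F (P(i := Q)))) \<in> P i)"

definition weakly_viable :: "'v set \<Rightarrow> 'a set \<Rightarrow> (('v \<Rightarrow> ('a \<times> 'a) set) \<Rightarrow> 'a set) \<Rightarrow> bool" where
  "weakly_viable V A F = (\<forall>a\<in>A. \<exists>P\<in>profiles V A. a \<in> F P)"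

definition reducible :: "'v set \<Rightarrow> 'a set \<Rightarrow> (('v \<Rightarrow> ('a \<times> 'a) set) \<Rightarrow> 'a set) \<Rightarrow> bool" where
  "reducible V A F = (\<exists>B C (G :: ('v \<Rightarrow> ('a \<times> 'a) set) \<Rightarrow> 'a) (H :: ('v \<Rightarrow> ('a \<times> 'a) set) \<Rightarrow> 'a).
      B \<union> C = A \<and> B \<inter> C = {} \<and>
      (\<forall>P\<in>profiles V B. G P \<in> B) \<and> (\<forall>P\<in>profiles V C. H P \<in> C) \<and>
      (\<forall>P\<in>profiles V A. F P = {G (restrict_profile P B), H (restrict_profile P C)}))"

definition irreducible :: "'v set \<Rightarrow> 'a set \<Rightarrow> (('v \<Rightarrow> ('a \<times> 'a) set) \<Rightarrow> 'a set) \<Rightarrow> bool" where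
  "irreducible V A F = (\<not> reducible V A F)"

definition range_edges :: "'v set \<Rightarrow> 'a set \<Rightarrow> (('v \<Rightarrow> ('a \<times> 'a) set) \<Rightarrow> 'a set) \<Rightarrow> 'a set set" where
  "range_edges V A F = F ` profiles V A"

end

theory Submission
  imports Defs
begin

text \<open>Suppose the edge {a, b} lies on no triangle and let N be the set of neighbours of a.
  Putting a vertex x on top of every ballot with the endpoints of an edge right below it, SPO
  keeps x elected and SPP keeps the outcome among these three; so every vertex is adjacent to an
  endpoint of every edge, and therefore every edge joins A - N to N. For such a bipartite rule,
  lifting A - N to the top of one ballot does not change the outcome, and between two ballots of
  this shape that agree on A - N, SPO in both directions pins down the elected member of A - N.
  Hence that member depends only on the profile restricted to A - N, likewise for N, and F is
  reducible.\<close>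

lemma linear_order_on_in_field: "linear_order_on A L \<Longrightarrow> (p, q) \<in> L \<Longrightarrow> p \<in> A \<and> q \<in> A"
  unfolding order_on_defs by blast

lemma linear_order_on_refl: "linear_order_on A L \<Longrightarrow> p \<in> A \<Longrightarrow> (p, p) \<in> L"
  unfolding order_on_defs refl_on_def by blast

lemma linear_order_on_trans: "linear_order_on A L \<Longrightarrow> (p, q) \<in> L \<Longrightarrow> (q, r) \<in> L \<Longrightarrow> (p, r) \<in> L"
  unfolding order_on_defs trans_def by blast

lemma linear_order_on_antisym: "linear_order_on A L \<Longrightarrow> (p, q) \<in> L \<Longrightarrow> (q, p) \<in> L \<Longrightarrow> p = q"
  unfolding order_on_defs antisym_def by blast

lemma linear_order_on_total:
  "linear_order_on A L \<Longrightarrow> p \<in> A \<Longrightarrow> q \<in> A \<Longrightarrow> (p, q) \<in> L \<or> (q, p) \<in> L"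
  unfolding order_on_defs refl_on_def total_on_def by (cases "p = q") blast+

lemma ex_linear_order_on: "\<exists>L. linear_order_on A L"
  using well_order_on[of A] unfolding well_order_on_def by blast

lemma best_eqI: "linear_order_on A L \<Longrightarrow> b \<in> W \<Longrightarrow> (\<And>x. x \<in> W \<Longrightarrow> (b, x) \<in> L) \<Longrightarrow> best L W = b"
  unfolding best_def by (rule the_equality) (auto dest: linear_order_on_antisym)

lemma worst_eqI: "linear_order_on A L \<Longrightarrow> w \<in> W \<Longrightarrow> (\<And>x. x \<in> W \<Longrightarrow> (x, w) \<in> L) \<Longrightarrow> worst L W = w"
  unfolding worst_def by (rule the_equality) (auto dest: linear_order_on_antisym)

lemma best_doubleton: "linear_order_on A L \<Longrightarrow> (p, q) \<in> L \<Longrightarrow> best L {p, q} = p"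
  by (rule best_eqI) (auto dest: linear_order_on_in_field intro: linear_order_on_refl)

lemma worst_doubleton: "linear_order_on A L \<Longrightarrow> (p, q) \<in> L \<Longrightarrow> worst L {p, q} = q"
  by (rule worst_eqI) (auto dest: linear_order_on_in_field intro: linear_order_on_refl)

lemma S2E:
  assumes "W \<in> S2 A"
  obtains p q where "W = {p, q}" "p \<noteq> q" "p \<in> A" "q \<in> A"
  using assms unfolding S2_def card_2_iff by blast

lemma S2_cases:
  assumes L: "linear_order_on A L" and W: "W \<in> S2 A"
  obtains p q where "W = {p, q}" "p \<noteq> q" "(p, q) \<in> L"
proof -
  obtain p q where pq: "W = {p, q}" "p \<noteq> q" "p \<in> A" "q \<in> A"
    using W by (rule S2E)
  consider "(p, q) \<in> L" | "(q, p) \<in> L" using linear_order_on_total[OF L pq(3,4)] by blast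
  then show thesis
    by cases (use pq that in \<open>metis insert_commute\<close>)+
qed

lemma best_S2:
  assumes L: "linear_order_on A L" and W: "W \<in> S2 A"
  shows "best L W \<in> W" and "x \<in> W \<Longrightarrow> (best L W, x) \<in> L"
proof -
  obtain p q where pq: "W = {p, q}" "(p, q) \<in> L" using S2_cases[OF L W] by blast
  then have "best L W = p" using best_doubleton[OF L] by blast
  moreover have "(p, p) \<in> L" using linear_order_on_refl[OF L] linear_order_on_in_field[OF L pq(2)] by blast
  ultimately show "best L W \<in> W" "x \<in> W \<Longrightarrow> (best L W, x) \<in> L" using pq by auto
qed

lemma worst_S2:
  assumes L: "linear_order_on A L" and W: "W \<in> S2 A"
  shows "worst L W \<in> W" and "x \<in> W \<Longrightarrow> (x, worst L W) \<in> L"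
proof -
  obtain p q where pq: "W = {p, q}" "(p, q) \<in> L" using S2_cases[OF L W] by blast
  then have "worst L W = q" using worst_doubleton[OF L] by blast
  moreover have "(q, q) \<in> L" using linear_order_on_refl[OF L] linear_order_on_in_field[OF L pq(2)] by blast
  ultimately show "worst L W \<in> W" "x \<in> W \<Longrightarrow> (x, worst L W) \<in> L" using pq by auto
qed

lemma doubleton_eq_if_dominated:
  assumes L: "linear_order_on A L" and ne: "b \<noteq> c" "b' \<noteq> c'"
    and down: "(b', b) \<in> L" "(c', c) \<in> L"
    and best: "(best L {b, c}, best L {b', c'}) \<in> L"
    and worst: "(worst L {b, c}, worst L {b', c'}) \<in> L"
  shows "{b, c} = {b', c'}"
proof -
  note antisym = linear_order_on_antisym[OF L] and trans = linear_order_on_trans[OF L]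
  have inA: "b \<in> A" "c \<in> A" "b' \<in> A" "c' \<in> A"
    using down linear_order_on_in_field[OF L] by blast+
  have flip: "best L {p, q} = q" "worst L {p, q} = p" if "(q, p) \<in> L" for p q
    using best_doubleton[OF L that] worst_doubleton[OF L that] by (simp_all add: insert_commute)
  have "(b, c) \<in> L \<or> (c, b) \<in> L" "(b', c') \<in> L \<or> (c', b') \<in> L"
    using linear_order_on_total[OF L] inA by blast+
  then consider "(b, c) \<in> L" "(b', c') \<in> L" | "(b, c) \<in> L" "(c', b') \<in> L"
    | "(c, b) \<in> L" "(b', c') \<in> L" | "(c, b) \<in> L" "(c', b') \<in> L"
    by blast
  then show ?thesis
  proof cases
    case 1
    then have "(b, b') \<in> L" "(c, c') \<in> L"
      using best worst by (simp_all add: best_doubleton[OF L] worst_doubleton[OF L])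
    then show ?thesis using down antisym by blast
  next
    case 2
    then have "(c, b') \<in> L" using worst by (simp add: worst_doubleton[OF L] flip)
    then have "(c, b) \<in> L" using down(1) trans by blast
    then show ?thesis using 2 ne antisym by blast
  next
    case 3
    then have "(b, c') \<in> L" using worst by (simp add: worst_doubleton[OF L] flip)
    then have "(b, c) \<in> L" using down(2) trans by blast
    then show ?thesis using 3 ne antisym by blast
  next
    case 4
    then have "(c, c') \<in> L" "(b, b') \<in> L" using best worst by (simp_all add: flip)
    then show ?thesis using down antisym by blast
  qed
qed

definition key_order :: "'a set \<Rightarrow> ('a \<Rightarrow> 'k::linorder) \<Rightarrow> ('a \<times> 'a) set \<Rightarrow> ('a \<times> 'a) set" where
  "key_order A f L = {(p, q). p \<in> A \<and> q \<in> A \<and> (f p < f q \<or> f p = f q \<and> (p, q) \<in> L)}"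

lemma linear_order_on_key_order:
  assumes L: "linear_order_on A L"
  shows "linear_order_on A (key_order A f L)"
  unfolding linear_order_on_def partial_order_on_def preorder_on_def
proof (intro conjI)
  show "key_order A f L \<subseteq> A \<times> A" unfolding key_order_def by auto
  show "refl_on A (key_order A f L)"
    unfolding key_order_def refl_on_def using linear_order_on_refl[OF L] by auto
  show "trans (key_order A f L)"
    unfolding trans_def
  proof (intro allI impI)
    fix p q r assume "(p, q) \<in> key_order A f L" "(q, r) \<in> key_order A f L"
    then show "(p, r) \<in> key_order A f L"
      unfolding key_order_def using linear_order_on_trans[OF L, of p q r] by auto
  qed
  show "antisym (key_order A f L)"
    unfolding antisym_def
  proof (intro allI impI)
    fix p q assume "(p, q) \<in> key_order A f L" "(q, p) \<in> key_order A f L"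
    then show "p = q" unfolding key_order_def using linear_order_on_antisym[OF L, of p q] by auto
  qed
  show "total_on A (key_order A f L)"
    unfolding total_on_def
  proof (intro ballI impI)
    fix p q assume "p \<in> A" "q \<in> A"
    then show "(p, q) \<in> key_order A f L \<or> (q, p) \<in> key_order A f L"
      unfolding key_order_def using linear_order_on_total[OF L, of p q] by auto
  qed
qed

definition upper_set :: "'a set \<Rightarrow> ('a \<times> 'a) set \<Rightarrow> 'a set \<Rightarrow> bool" where
  "upper_set A R T \<longleftrightarrow> (\<forall>y\<in>T. \<forall>z\<in>A - T. (y, z) \<in> R)"

lemma upper_setD:
  assumes R: "linear_order_on A R" and T: "upper_set A R T" and zy: "(z, y) \<in> R" and y: "y \<in> T"
  shows "z \<in> T"
proof (rule ccontr)
  assume "z \<notin> T"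
  moreover have "z \<in> A" using linear_order_on_in_field[OF R zy] by blast
  ultimately have "(y, z) \<in> R" using T y unfolding upper_set_def by blast
  then show False using linear_order_on_antisym[OF R zy] y \<open>z \<notin> T\<close> by blast
qed

lemma upper_set_key_order: "upper_set A (key_order A f L) {y \<in> A. f y \<le> k}"
  unfolding upper_set_def key_order_def by auto

text \<open>The key is boolean with False < True, so the members of X come first.\<close>

definition top_block :: "'a set \<Rightarrow> 'a set \<Rightarrow> ('a \<times> 'a) set \<Rightarrow> ('a \<times> 'a) set" where
  "top_block A X L = key_order A (\<lambda>p. p \<notin> X) L"

lemma linear_order_on_top_block: "linear_order_on A L \<Longrightarrow> linear_order_on A (top_block A X L)"
  unfolding top_block_def by (rule linear_order_on_key_order)

lemma top_block_above: "p \<in> A \<Longrightarrow> q \<in> A \<Longrightarrow> p \<in> X \<Longrightarrow> q \<notin> X \<Longrightarrow> (p, q) \<in> top_block A X L"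
  unfolding top_block_def key_order_def by auto

lemma top_block_same_side:
  "p \<in> A \<Longrightarrow> q \<in> A \<Longrightarrow> (p \<in> X \<longleftrightarrow> q \<in> X) \<Longrightarrow> (p, q) \<in> top_block A X L \<longleftrightarrow> (p, q) \<in> L"
  unfolding top_block_def key_order_def by auto

lemma profiles_linear_order_on: "P \<in> profiles V A \<Longrightarrow> i \<in> V \<Longrightarrow> linear_order_on A (P i)"
  unfolding profiles_def by auto

lemma profiles_update:
  "P \<in> profiles V A \<Longrightarrow> i \<in> V \<Longrightarrow> linear_order_on A Q \<Longrightarrow> P(i := Q) \<in> profiles V A"
  unfolding profiles_def by auto

lemma profiles_unanimous:
  "linear_order_on A R \<Longrightarrow> (\<lambda>i. if i \<in> V then R else {}) \<in> profiles V A"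
  unfolding profiles_def by auto

lemma profiles_one_voter_induct:
  assumes V: "finite V" and P0: "P0 \<in> profiles V A" and P1: "P1 \<in> profiles V A"
    and start: "\<Psi> P0"
    and step: "\<And>P i. P \<in> profiles V A \<Longrightarrow> i \<in> V \<Longrightarrow> (\<forall>j. P j = P0 j \<or> P j = P1 j)
        \<Longrightarrow> \<Psi> P \<Longrightarrow> \<Psi> (P(i := P1 i))"
  shows "\<Psi> P1"
proof -
  let ?mix = "\<lambda>S j. if j \<in> S then P1 j else P0 j"
  have mix: "S \<subseteq> V \<Longrightarrow> \<Psi> (?mix S)" if "finite S" for S
    using that
  proof (induction S rule: finite_induct)
    case empty
    then show ?case using start by simp
  next
    case (insert i S)
    have "?mix S \<in> profiles V A" using P0 P1 unfolding profiles_def by auto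
    moreover have "\<forall>j. ?mix S j = P0 j \<or> ?mix S j = P1 j" by simp
    moreover have "?mix (insert i S) = (?mix S)(i := P1 i)" by (rule ext) simp
    ultimately show ?case using step[of "?mix S" i] insert by simp
  qed
  have "?mix V = P1" using P0 P1 unfolding profiles_def by (intro ext) auto
  then show ?thesis using mix[OF V] by simp
qed

definition range_bipartite ::
  "'v set \<Rightarrow> 'a set \<Rightarrow> (('v \<Rightarrow> ('a \<times> 'a) set) \<Rightarrow> 'a set) \<Rightarrow> 'a set \<Rightarrow> 'a set \<Rightarrow> bool" where
  "range_bipartite V A F X Y \<longleftrightarrow> (\<forall>P\<in>profiles V A. \<exists>\<beta>\<in>X. \<exists>\<gamma>\<in>Y. F P = {\<beta>, \<gamma>})"

lemma range_bipartite_commute: "range_bipartite V A F X Y \<longleftrightarrow> range_bipartite V A F Y X"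
  unfolding range_bipartite_def by (metis insert_commute)

lemma reducibleI:
  assumes part: "X \<union> Y = A" "X \<inter> Y = {}" and ne: "X \<noteq> {}" "Y \<noteq> {}"
    and bip: "range_bipartite V A F X Y"
    and indep_X: "\<And>P P'. P \<in> profiles V A \<Longrightarrow> P' \<in> profiles V A
        \<Longrightarrow> restrict_profile P X = restrict_profile P' X \<Longrightarrow> F P \<inter> X = F P' \<inter> X"
    and indep_Y: "\<And>P P'. P \<in> profiles V A \<Longrightarrow> P' \<in> profiles V A
        \<Longrightarrow> restrict_profile P Y = restrict_profile P' Y \<Longrightarrow> F P \<inter> Y = F P' \<inter> Y"
  shows "reducible V A F"
proof -
  have indep: "F P \<inter> Z = F P' \<inter> Z" if "Z \<in> {X, Y}" "P \<in> profiles V A" "P' \<in> profiles V A"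
    "restrict_profile P Z = restrict_profile P' Z" for P P' Z
    using that indep_X indep_Y by blast
  have meets: "F P \<inter> Z \<noteq> {}" if "Z \<in> {X, Y}" "P \<in> profiles V A" for Z P
    using bip that unfolding range_bipartite_def by blast
  have choose: "\<exists>G. \<forall>Q. G Q \<in> Z \<and> (\<forall>P\<in>profiles V A. restrict_profile P Z = Q \<longrightarrow> G Q \<in> F P)"
    if Z: "Z \<in> {X, Y}" for Z
  proof (rule choice, rule allI)
    fix Q
    show "\<exists>\<beta>. \<beta> \<in> Z \<and> (\<forall>P\<in>profiles V A. restrict_profile P Z = Q \<longrightarrow> \<beta> \<in> F P)"
    proof (cases "\<exists>P\<in>profiles V A. restrict_profile P Z = Q")
      case True
      then obtain P where P: "P \<in> profiles V A" "restrict_profile P Z = Q" by blast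
      obtain \<beta> where \<beta>: "\<beta> \<in> F P \<inter> Z" using meets[OF Z P(1)] by blast
      have "\<beta> \<in> F P'" if "P' \<in> profiles V A" "restrict_profile P' Z = Q" for P'
        using indep[OF Z P(1) that(1)] P(2) that(2) \<beta> by auto
      then show ?thesis using \<beta> by blast
    next
      case False
      then show ?thesis using ne Z by blast
    qed
  qed
  obtain G where G: "\<And>Q. G Q \<in> X"
    "\<And>P. P \<in> profiles V A \<Longrightarrow> G (restrict_profile P X) \<in> F P"
    using choose[of X] by blast
  obtain H where H: "\<And>Q. H Q \<in> Y"
    "\<And>P. P \<in> profiles V A \<Longrightarrow> H (restrict_profile P Y) \<in> F P"
    using choose[of Y] by blast
  have decompose: "F P = {G (restrict_profile P X), H (restrict_profile P Y)}" if P: "P \<in> profiles V A" for P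
  proof -
    obtain \<beta> \<gamma> where \<beta>\<gamma>: "F P = {\<beta>, \<gamma>}" "\<beta> \<in> X" "\<gamma> \<in> Y"
      using bip P unfolding range_bipartite_def by blast
    have "G (restrict_profile P X) = \<beta>" "H (restrict_profile P Y) = \<gamma>"
      using G(1)[of "restrict_profile P X"] H(1)[of "restrict_profile P Y"] G(2)[OF P] H(2)[OF P]
        \<beta>\<gamma> part(2) by auto
    then show ?thesis using \<beta>\<gamma>(1) by simp
  qed
  show ?thesis
    unfolding reducible_def
    by (rule exI[of _ X], rule exI[of _ Y], rule exI[of _ G], rule exI[of _ H])
      (use part G(1) H(1) decompose in auto)
qed

locale strategyproof_consular_rule =
  fixes V :: "'v set" and A :: "'a set" and F :: "('v \<Rightarrow> ('a \<times> 'a) set) \<Rightarrow> 'a set"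
  assumes finite_voters: "finite V" and consular: "consular_rule V A F"
    and optimist_proof: "SPO V A F" and pessimist_proof: "SPP V A F"
begin

lemma outcome_S2: "P \<in> profiles V A \<Longrightarrow> F P \<in> S2 A"
  using consular unfolding consular_rule_def by blast

lemma range_edges_S2: "e \<in> range_edges V A F \<Longrightarrow> e \<in> S2 A"
  unfolding range_edges_def using outcome_S2 by blast

lemma SPO_update:
  assumes P: "P \<in> profiles V A" and i: "i \<in> V" and R: "linear_order_on A R" and Q: "linear_order_on A Q"
  shows "(best R (F (P(i := R))), best R (F (P(i := Q)))) \<in> R"
  using optimist_proof profiles_update[OF P i R] i Q unfolding SPO_def by fastforce

lemma SPP_update:
  assumes P: "P \<in> profiles V A" and i: "i \<in> V" and R: "linear_order_on A R" and Q: "linear_order_on A Q"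
  shows "(worst R (F (P(i := R))), worst R (F (P(i := Q)))) \<in> R"
  using pessimist_proof profiles_update[OF P i R] i Q unfolding SPP_def by fastforce

lemma outcome_meets_upper_set:
  assumes P0: "P0 \<in> profiles V A" and P1: "P1 \<in> profiles V A"
    and meets: "F P0 \<inter> T \<noteq> {}" and upper: "\<forall>i\<in>V. upper_set A (P1 i) T"
  shows "F P1 \<inter> T \<noteq> {}"
  using finite_voters P0 P1 meets
proof (rule profiles_one_voter_induct[where \<Psi> = "\<lambda>P. F P \<inter> T \<noteq> {}"])
  fix P i assume P: "P \<in> profiles V A" and i: "i \<in> V" and "F P \<inter> T \<noteq> {}"
  then obtain t where t: "t \<in> F P" "t \<in> T" by blast
  let ?R = "P1 i"
  have R: "linear_order_on A ?R" using profiles_linear_order_on[OF P1 i] .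
  have RT: "upper_set A ?R T" using upper i by blast
  have "best ?R (F P) \<in> T"
    using upper_setD[OF R RT best_S2(2)[OF R outcome_S2[OF P] t(1)] t(2)] .
  moreover have "(best ?R (F (P(i := ?R))), best ?R (F P)) \<in> ?R"
    using SPO_update[OF P i R profiles_linear_order_on[OF P i]] by simp
  ultimately have "best ?R (F (P(i := ?R))) \<in> T" using upper_setD[OF R RT] by blast
  moreover have "best ?R (F (P(i := ?R))) \<in> F (P(i := ?R))"
    using best_S2(1)[OF R outcome_S2[OF profiles_update[OF P i R]]] .
  ultimately show "F (P(i := P1 i)) \<inter> T \<noteq> {}" by blast
qed

lemma outcome_within_upper_set:
  assumes P0: "P0 \<in> profiles V A" and P1: "P1 \<in> profiles V A"
    and within: "F P0 \<subseteq> T" and upper: "\<forall>i\<in>V. upper_set A (P1 i) T"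
  shows "F P1 \<subseteq> T"
  using finite_voters P0 P1 within
proof (rule profiles_one_voter_induct[where \<Psi> = "\<lambda>P. F P \<subseteq> T"])
  fix P i assume P: "P \<in> profiles V A" and i: "i \<in> V" and PT: "F P \<subseteq> T"
  let ?R = "P1 i"
  have R: "linear_order_on A ?R" using profiles_linear_order_on[OF P1 i] .
  have RT: "upper_set A ?R T" using upper i by blast
  have P': "P(i := ?R) \<in> profiles V A" using profiles_update[OF P i R] .
  have "(worst ?R (F (P(i := ?R))), worst ?R (F P)) \<in> ?R"
    using SPP_update[OF P i R profiles_linear_order_on[OF P i]] by simp
  moreover have "worst ?R (F P) \<in> T" using worst_S2(1)[OF R outcome_S2[OF P]] PT by blast
  ultimately have "y \<in> T" if "y \<in> F (P(i := ?R))" for y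
    using worst_S2(2)[OF R outcome_S2[OF P'] that] linear_order_on_trans[OF R] upper_setD[OF R RT]
    by blast
  then show "F (P(i := P1 i)) \<subseteq> T" by blast
qed

text \<open>Rank x first and u, v next on every ballot: by SPO x remains elected, by SPP nothing
  ranked below u and v gets elected.\<close>

lemma range_edge_dominating:
  assumes viable: "weakly_viable V A F" and e: "{u, v} \<in> range_edges V A F" and x: "x \<in> A"
  shows "\<exists>w\<in>{u, v}. w \<noteq> x \<and> {x, w} \<in> range_edges V A F"
proof -
  have uv: "u \<in> A" "v \<in> A" "u \<noteq> v"
    using range_edges_S2[OF e] unfolding S2_def by (auto simp: card_2_iff doubleton_eq_iff)
  show ?thesis
  proof (cases "x \<in> {u, v}")
    case True
    then show ?thesis using e uv by (auto simp: insert_commute)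
  next
    case False
    obtain P0 where P0: "P0 \<in> profiles V A" "F P0 = {u, v}" using e unfolding range_edges_def by auto
    obtain Px where Px: "Px \<in> profiles V A" "x \<in> F Px" using viable x unfolding weakly_viable_def by blast
    obtain L where L: "linear_order_on A L" using ex_linear_order_on by blast
    define rank where "rank y = (if y = x then 0 else if y \<in> {u, v} then 1 else 2::nat)" for y
    define P1 where "P1 = (\<lambda>i. if i \<in> V then key_order A rank L else {})"
    have P1: "P1 \<in> profiles V A"
      unfolding P1_def by (rule profiles_unanimous[OF linear_order_on_key_order[OF L]])
    have upper: "\<forall>i\<in>V. upper_set A (P1 i) {y \<in> A. rank y \<le> k}" for k
      unfolding P1_def by (simp add: upper_set_key_order)
    have "{y \<in> A. rank y \<le> 0} = {x}" "{y \<in> A. rank y \<le> 1} = {x, u, v}"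
      using x uv False by (auto simp: rank_def)
    then have "F P1 \<inter> {x} \<noteq> {}" "F P1 \<subseteq> {x, u, v}"
      using outcome_meets_upper_set[OF Px(1) P1 _ upper[of 0]]
        outcome_within_upper_set[OF P0(1) P1 _ upper[of 1]] Px(2) P0(2) by auto
    moreover obtain p q where "F P1 = {p, q}" "p \<noteq> q"
      using outcome_S2[OF P1] by (rule S2E)
    ultimately obtain w where "F P1 = {x, w}" "w \<in> {u, v}" "w \<noteq> x" by auto
    moreover have "F P1 \<in> range_edges V A F" using P1 unfolding range_edges_def by blast
    ultimately show ?thesis by auto
  qed
qed

lemma range_bipartite_if_triangle_free:
  assumes viable: "weakly_viable V A F" and ab: "{a, b} \<in> range_edges V A F"
    and triangle_free: "\<not> (\<exists>c\<in>A. {a, c} \<in> range_edges V A F \<and> {b, c} \<in> range_edges V A F)"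
  defines "N \<equiv> {x \<in> A. {a, x} \<in> range_edges V A F}"
  shows "range_bipartite V A F (A - N) N"
  unfolding range_bipartite_def
proof
  fix P assume P: "P \<in> profiles V A"
  obtain p q where pq: "F P = {p, q}" "p \<in> A" "q \<in> A"
    using outcome_S2[OF P] by (rule S2E)
  have e: "{p, q} \<in> range_edges V A F"
    unfolding range_edges_def using P pq(1) by (metis image_eqI)
  have "{a, b} \<subseteq> A" using range_edges_S2[OF ab] unfolding S2_def by blast
  then have "a \<in> A" "b \<in> A" by blast+
  have "\<not> (p \<in> N \<and> q \<in> N)"
  proof
    assume "p \<in> N \<and> q \<in> N"
    moreover obtain w where "w \<in> {p, q}" "{b, w} \<in> range_edges V A F"
      using range_edge_dominating[OF viable e \<open>b \<in> A\<close>] by blast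
    ultimately have "w \<in> A" "{a, w} \<in> range_edges V A F" "{b, w} \<in> range_edges V A F"
      unfolding N_def by blast+
    then show False using triangle_free by blast
  qed
  moreover have "p \<in> N \<or> q \<in> N"
  proof -
    obtain w where "w \<in> {p, q}" "{a, w} \<in> range_edges V A F"
      using range_edge_dominating[OF viable e \<open>a \<in> A\<close>] by blast
    then show ?thesis using pq(2,3) unfolding N_def by blast
  qed
  ultimately consider "p \<in> A - N" "q \<in> N" | "q \<in> A - N" "p \<in> N" using pq by blast
  then show "\<exists>\<beta>\<in>A - N. \<exists>\<gamma>\<in>N. F P = {\<beta>, \<gamma>}"
  proof cases
    case 1
    then show ?thesis using pq(1) by blast
  next
    case 2
    then show ?thesis using pq(1) by (metis insert_commute)
  qed
qed

end

locale bipartite_consular_rule = strategyproof_consular_rule +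
  fixes X Y :: "'a set"
  assumes partition: "X \<union> Y = A" "X \<inter> Y = {}"
    and bipartite: "range_bipartite V A F X Y"
begin

lemma outcome_top_block:
  assumes P: "P \<in> profiles V A" and L: "linear_order_on A L"
  defines "R \<equiv> top_block A X L"
  shows "F P \<inter> X = {best R (F P)}" and "F P \<inter> Y = {worst R (F P)}"
    and "F P = {best R (F P), worst R (F P)}"
proof -
  obtain \<beta> \<gamma> where \<beta>\<gamma>: "F P = {\<beta>, \<gamma>}" "\<beta> \<in> X" "\<gamma> \<in> Y"
    using bipartite P unfolding range_bipartite_def by blast
  have R: "linear_order_on A R" unfolding R_def using linear_order_on_top_block[OF L] .
  have sides: "\<gamma> \<notin> X" "\<beta> \<notin> Y" using partition(2) \<beta>\<gamma> by blast+
  moreover have "\<beta> \<in> A" "\<gamma> \<in> A" using partition(1) \<beta>\<gamma> by blast+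
  ultimately have "(\<beta>, \<gamma>) \<in> R" unfolding R_def using \<beta>\<gamma>(2) by (simp add: top_block_above)
  then have "best R (F P) = \<beta>" "worst R (F P) = \<gamma>"
    unfolding \<beta>\<gamma>(1) using best_doubleton[OF R] worst_doubleton[OF R] by blast+
  then show "F P \<inter> X = {best R (F P)}" "F P \<inter> Y = {worst R (F P)}"
    "F P = {best R (F P), worst R (F P)}"
    using \<beta>\<gamma> sides by auto
qed

text \<open>SPO and SPP, applied to the switch in both directions, leave no room for the outcome
  to move.\<close>

lemma outcome_top_block_update:
  assumes P: "P \<in> profiles V A" and i: "i \<in> V"
  shows "F (P(i := top_block A X (P i))) = F P"
proof -
  let ?L = "P i" and ?R = "top_block A X (P i)"
  let ?P' = "P(i := ?R)"
  have L: "linear_order_on A ?L" using profiles_linear_order_on[OF P i] .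
  have R: "linear_order_on A ?R" using linear_order_on_top_block[OF L] .
  have P': "?P' \<in> profiles V A" using profiles_update[OF P i R] .
  define b c b' c' where "b = best ?R (F P)" "c = worst ?R (F P)"
    "b' = best ?R (F ?P')" "c' = worst ?R (F ?P')"
  have split: "F P = {b, c}" "F ?P' = {b', c'}" "b \<in> X" "b' \<in> X" "c \<in> Y" "c' \<in> Y"
    using outcome_top_block[OF P L] outcome_top_block[OF P' L] unfolding b_c_b'_c'_def by auto
  then have side: "b \<in> A" "c \<in> A" "b' \<in> A" "c' \<in> A" "c \<notin> X" "c' \<notin> X" "b \<noteq> c" "b' \<noteq> c'"
    using partition by auto
  have "(b', b) \<in> ?R" "(c', c) \<in> ?R"
    using SPO_update[OF P i R L] SPP_update[OF P i R L] unfolding b_c_b'_c'_def by simp_all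
  then have "(b', b) \<in> ?L" "(c', c) \<in> ?L"
    using top_block_same_side[of _ A _ X ?L] side split by blast+
  moreover have "(best ?L {b, c}, best ?L {b', c'}) \<in> ?L" "(worst ?L {b, c}, worst ?L {b', c'}) \<in> ?L"
    using SPO_update[OF P i L R] SPP_update[OF P i L R] split by simp_all
  ultimately have "{b, c} = {b', c'}" using doubleton_eq_if_dominated[OF L] side by blast
  then show ?thesis using split by simp
qed

lemma outcome_X_part_update:
  assumes P: "P \<in> profiles V A" and i: "i \<in> V" and Q: "linear_order_on A Q"
    and agree: "Q \<inter> (X \<times> X) = P i \<inter> (X \<times> X)"
  shows "F (P(i := Q)) \<inter> X = F P \<inter> X"
proof -
  let ?R1 = "top_block A X (P i)" and ?R2 = "top_block A X Q"
  let ?P1 = "P(i := ?R1)" and ?P2 = "P(i := ?R2)"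
  have L: "linear_order_on A (P i)" using profiles_linear_order_on[OF P i] .
  have R1: "linear_order_on A ?R1" using linear_order_on_top_block[OF L] .
  have R2: "linear_order_on A ?R2" using linear_order_on_top_block[OF Q] .
  have P1: "?P1 \<in> profiles V A" using profiles_update[OF P i R1] .
  have P2: "?P2 \<in> profiles V A" using profiles_update[OF P i R2] .
  define x1 where "x1 = best ?R1 (F ?P1)"
  define x2 where "x2 = best ?R2 (F ?P2)"
  have x1: "F ?P1 \<inter> X = {x1}" "best ?R2 (F ?P1) = x1"
    using outcome_top_block(1)[OF P1 L] outcome_top_block(1)[OF P1 Q] unfolding x1_def by auto
  have x2: "F ?P2 \<inter> X = {x2}" "best ?R1 (F ?P2) = x2"
    using outcome_top_block(1)[OF P2 L] outcome_top_block(1)[OF P2 Q] unfolding x2_def by auto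
  have in_X: "x1 \<in> X" "x2 \<in> X" using x1(1) x2(1) by blast+
  then have in_A: "x1 \<in> A" "x2 \<in> A" using partition(1) by blast+
  have "(x1, x2) \<in> ?R1" "(x2, x1) \<in> ?R2"
    using SPO_update[OF P i R1 R2] SPO_update[OF P i R2 R1] x1(2) x2(2)
    unfolding x1_def x2_def by simp_all
  then have "(x1, x2) \<in> P i" "(x2, x1) \<in> Q"
    using top_block_same_side[OF in_A, of X] top_block_same_side[OF in_A(2,1), of X] in_X by simp_all
  then have "x1 = x2" using agree in_X linear_order_on_antisym[OF Q] by blast
  moreover have "F ?P1 = F P" "F ?P2 = F (P(i := Q))"
    using outcome_top_block_update[OF P i] outcome_top_block_update[OF profiles_update[OF P i Q] i]
    by simp_all
  ultimately show ?thesis using x1(1) x2(1) by simp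
qed

lemma outcome_X_part_restrict:
  assumes P: "P \<in> profiles V A" and P': "P' \<in> profiles V A"
    and agree: "restrict_profile P X = restrict_profile P' X"
  shows "F P \<inter> X = F P' \<inter> X"
  using finite_voters P P' refl
proof (rule profiles_one_voter_induct[where \<Psi> = "\<lambda>H. F P \<inter> X = F H \<inter> X"])
  fix H i assume H: "H \<in> profiles V A" and i: "i \<in> V" and mix: "\<forall>j. H j = P j \<or> H j = P' j"
    and "F P \<inter> X = F H \<inter> X"
  moreover have "P' i \<inter> (X \<times> X) = H i \<inter> (X \<times> X)"
    using mix fun_cong[OF agree, of i] unfolding restrict_profile_def by metis
  ultimately show "F P \<inter> X = F (H(i := P' i)) \<inter> X"
    using outcome_X_part_update[OF H i profiles_linear_order_on[OF P' i]] by simp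
qed

end

theorem corollary40:
  fixes V :: "'v set" and A :: "'a set"
    and F :: "('v \<Rightarrow> ('a \<times> 'a) set) \<Rightarrow> 'a set"
  assumes "finite V" and "V \<noteq> {}" and "finite A"
    and "consular_rule V A F"
    and "irreducible V A F" and "weakly_viable V A F"
    and "SPP V A F" and "SPO V A F"
    and "{a, b} \<in> range_edges V A F"
  shows "\<exists>c\<in>A. {a, c} \<in> range_edges V A F \<and> {b, c} \<in> range_edges V A F"
proof (rule ccontr)
  assume triangle_free: "\<not> ?thesis"
  interpret strategyproof_consular_rule V A F using assms by unfold_locales
  define N where "N = {x \<in> A. {a, x} \<in> range_edges V A F}"
  have bip: "range_bipartite V A F (A - N) N"
    unfolding N_def by (rule range_bipartite_if_triangle_free) (use assms triangle_free in auto)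
  have "a \<in> A - N" "b \<in> N"
    using range_edges_S2[OF assms(9)] range_edges_S2[of "{a}"] assms(9) unfolding N_def S2_def by auto
  interpret X: bipartite_consular_rule V A F "A - N" N
    using bip by unfold_locales (auto simp: N_def)
  interpret Y: bipartite_consular_rule V A F N "A - N"
    using bip by unfold_locales (auto simp: N_def range_bipartite_commute)
  have "N \<subseteq> A" unfolding N_def by blast
  have "reducible V A F"
    by (rule reducibleI[OF _ _ _ _ bip X.outcome_X_part_restrict Y.outcome_X_part_restrict])
      (use \<open>N \<subseteq> A\<close> \<open>a \<in> A - N\<close> \<open>b \<in> N\<close> in auto)
  then show False using assms(5) unfolding irreducible_def by blast
qed

end
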